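(* If $x_1:A_1,\dots,x_k:A_k\vdash t:A$ is derivable in $\mathbf{IL}_{\mathbf{at}}$, then the term $t$ of $A$ from $x_1:A_1,\dots,x_k:A_k$ is valid in every phase model $(D_{\mathcal M},* )$; that is, for all $(m_i\rhd t_i)\in A_i^*$ ($1\le i\le k$) we have $(m_1\cdots m_k\rhd t[x_1:=t_1,\dots,x_k:=t_k])\in A^*$.
   Context: System $\mathbf{IL}_{\mathbf{at}}$: formulas $A ::= X\mid A\to B\mid \forall X.A$ ($X$ atoms); terms $t ::= x\mid c^A\mid\lambda x.t\mid ts\mid\Lambda X.t\mid tX$ (a term-constant $c^A$ for each formula $A$; $tX$ only with $X$ an atom). $\Gamma\vdash t:A$ is derivable by: $\Gamma,x:A\vdash x:A$; $\Gamma\vdash c^A:A$; from $\Gamma,x:A\vdash t:B$ infer $\Gamma\vdash\lambda x.t:A\to B$; from $\Gamma\vdash t:A\to B$, $\Gamma\vdash s:A$ infer $\Gamma\vdash ts:B$; from $\Gamma\vdash t:A$ with $X$ not free in the formulas of $\Gamma$ infer $\Gamma\vdash\Lambda X.t:\forall X.A$; from $\Gamma\vdash t:\forall X.A$ infer $\Gamma\vdash tY:A[X:=Y]$ ($Y$ an atom). Substitutions are capture-avoiding. Phase space: an idempotent commutative monoid $\mathcal M=(M,\cdot,\varepsilon)$ ($m\cdot m=m$); domain $B_{\mathcal M}=\{(m\rhd t)\mid m\in M,\ t\text{ a term}\}$; $D_{\mathcal M}$ is the set of closed sets, i.e. subsets $\alpha\subseteq B_{\mathcal M}$ such that (Monotonicity)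 $(m\rhd t)\in\alpha$ implies $(m\cdot n\rhd t)\in\alpha$ for all $n\in M$, and (Expansion) for $T_1,\dots,T_k$ terms or atoms: (i) $(m\rhd t[x:=s]T_1\cdots T_k)\in\alpha$ implies $(m\rhd(\lambda x.t)sT_1\cdots T_k)\in\alpha$; (ii) $(m\rhd t[X:=Y]T_1\cdots T_k)\in\alpha$ implies $(m\rhd(\Lambda X.t)YT_1\cdots T_k)\in\alpha$. Phase model $(D_{\mathcal M},* )$: a phase space with an interpretation such that $X^*\in D_{\mathcal M}$ for every atom $X$; $(A\to B)^*=\{(m\rhd t)\mid (m\cdot n\rhd ts)\in B^*\text{ for all }(n\rhd s)\in A^*\}$; $(\forall X.A)^*=\{(m\rhd t)\mid (m\rhd tY)\in(A[X:=Y])^*\text{ for every atom }Y\}$; and $(\varepsilon\rhd c^A)\in A^*$ for every formula $A$. *)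

theory Defs
  imports Main
begin

text \<open>Atoms are de Bruijn indices: an index below the binder depth is bound
  by an enclosing All, any other index denotes a free atom (the free atom named n
  appears as index n + depth). At top level every Atom n is the free atom n.\<close>

datatype fm = Atom nat | Imp fm fm | All fm

text \<open>Terms: term variables and atoms are de Bruijn indices in two separate namespaces.
  Lam binds term index 0, TLam binds atom index 0.\<close>

datatype trm = Var nat | Const fm | Lam trm | App trm trm | TLam trm | TApp trm nat

primrec fm_lift :: "nat \<Rightarrow> fm \<Rightarrow> fm" where
  "fm_lift k (Atom i) = Atom (if i < k then i else Suc i)"
| "fm_lift k (Imp A B) = Imp (fm_lift k A) (fm_lift k B)"
| "fm_lift k (All A) = All (fm_lift (Suc k) A)"

text \<open>Instantiating the atom bound at depth k by the (top-level) free atom Y.\<close>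
primrec fm_inst :: "nat \<Rightarrow> nat \<Rightarrow> fm \<Rightarrow> fm" where
  "fm_inst k Y (Atom i) = Atom (if i < k then i else if i = k then Y + k else i - 1)"
| "fm_inst k Y (Imp A B) = Imp (fm_inst k Y A) (fm_inst k Y B)"
| "fm_inst k Y (All A) = All (fm_inst (Suc k) Y A)"

text \<open>For All A (i.e. \<forall>X.A), inst A Y is A[X:=Y].\<close>
definition inst :: "fm \<Rightarrow> nat \<Rightarrow> fm" where
  "inst A Y = fm_inst 0 Y A"

primrec tm_lift :: "nat \<Rightarrow> trm \<Rightarrow> trm" where
  "tm_lift k (Var i) = Var (if i < k then i else Suc i)"
| "tm_lift k (Const A) = Const A"
| "tm_lift k (Lam t) = Lam (tm_lift (Suc k) t)"
| "tm_lift k (App t s) = App (tm_lift k t) (tm_lift k s)"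
| "tm_lift k (TLam t) = TLam (tm_lift k t)"
| "tm_lift k (TApp t Y) = TApp (tm_lift k t) Y"

primrec ty_lift :: "nat \<Rightarrow> trm \<Rightarrow> trm" where
  "ty_lift k (Var i) = Var i"
| "ty_lift k (Const A) = Const (fm_lift k A)"
| "ty_lift k (Lam t) = Lam (ty_lift k t)"
| "ty_lift k (App t s) = App (ty_lift k t) (ty_lift k s)"
| "ty_lift k (TLam t) = TLam (ty_lift (Suc k) t)"
| "ty_lift k (TApp t Y) = TApp (ty_lift k t) (if Y < k then Y else Suc Y)"

text \<open>Capture-avoiding substitution of s for the term variable at depth k
  (beta substitution: t[x:=s] for (\<lambda>x.t) s is tm_subst 0 s t).\<close>
primrec tm_subst :: "nat \<Rightarrow> trm \<Rightarrow> trm \<Rightarrow> trm" where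
  "tm_subst k s (Var i) = (if i < k then Var i else if i = k then s else Var (i - 1))"
| "tm_subst k s (Const A) = Const A"
| "tm_subst k s (Lam t) = Lam (tm_subst (Suc k) (tm_lift 0 s) t)"
| "tm_subst k s (App t u) = App (tm_subst k s t) (tm_subst k s u)"
| "tm_subst k s (TLam t) = TLam (tm_subst k (ty_lift 0 s) t)"
| "tm_subst k s (TApp t Y) = TApp (tm_subst k s t) Y"

text \<open>Instantiating the atom bound at depth k by the free atom Y inside a term
  (t[X:=Y] for (\<Lambda>X.t) Y is ty_inst 0 Y t).\<close>
primrec ty_inst :: "nat \<Rightarrow> nat \<Rightarrow> trm \<Rightarrow> trm" where
  "ty_inst k Y (Var i) = Var i"
| "ty_inst k Y (Const A) = Const (fm_inst k Y A)"
| "ty_inst k Y (Lam t) = Lam (ty_inst k Y t)"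
| "ty_inst k Y (App t s) = App (ty_inst k Y t) (ty_inst k Y s)"
| "ty_inst k Y (TLam t) = TLam (ty_inst (Suc k) Y t)"
| "ty_inst k Y (TApp t Z) =
     TApp (ty_inst k Y t) (if Z < k then Z else if Z = k then Y + k else Z - 1)"

primrec msubst :: "(nat \<Rightarrow> trm) \<Rightarrow> trm \<Rightarrow> trm" where
  "msubst \<sigma> (Var i) = \<sigma> i"
| "msubst \<sigma> (Const A) = Const A"
| "msubst \<sigma> (Lam t) = Lam (msubst (\<lambda>i. if i = 0 then Var 0 else tm_lift 0 (\<sigma> (i - 1))) t)"
| "msubst \<sigma> (App t s) = App (msubst \<sigma> t) (msubst \<sigma> s)"
| "msubst \<sigma> (TLam t) = TLam (msubst (\<lambda>i. ty_lift 0 (\<sigma> i)) t)"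
| "msubst \<sigma> (TApp t Y) = TApp (msubst \<sigma> t) Y"

text \<open>t[x_1:=t_1,...,x_k:=t_k] for a context of length k: variable i (< k) is
  replaced by ts ! i; other free variables are left alone (renumbered).\<close>
definition psubst :: "trm list \<Rightarrow> trm \<Rightarrow> trm" where
  "psubst ts t = msubst (\<lambda>i. if i < length ts then ts ! i else Var (i - length ts)) t"

text \<open>Contexts are lists; Var i has the type Gamma ! i; Lam extends the context at the front.
  The eigenvariable condition of the \<forall>-introduction is realised by lifting the context.\<close>
inductive typing :: "fm list \<Rightarrow> trm \<Rightarrow> fm \<Rightarrow> bool" where
  ty_var: "i < length \<Gamma> \<Longrightarrow> typing \<Gamma> (Var i) (\<Gamma> ! i)"
| ty_const: "typing \<Gamma> (Const A) A"
| ty_lam: "typing (A # \<Gamma>) t B \<Longrightarrow> typing \<Gamma> (Lam t) (Imp A B)"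
| ty_app: "typing \<Gamma> t (Imp A B) \<Longrightarrow> typing \<Gamma> s A \<Longrightarrow> typing \<Gamma> (App t s) B"
| ty_tlam: "typing (map (fm_lift 0) \<Gamma>) t A \<Longrightarrow> typing \<Gamma> (TLam t) (All A)"
| ty_tapp: "typing \<Gamma> t (All A) \<Longrightarrow> typing \<Gamma> (TApp t Y) (inst A Y)"

text \<open>Application spine t T_1 ... T_k, each T_j a term (Inl) or an atom (Inr).\<close>
definition spine :: "trm \<Rightarrow> (trm + nat) list \<Rightarrow> trm" where
  "spine t Ts = foldl (\<lambda>u a. case a of Inl s \<Rightarrow> App u s | Inr Y \<Rightarrow> TApp u Y) t Ts"

definition closed_set :: "('m::monoid_mult \<times> trm) set \<Rightarrow> bool" where
  "closed_set \<alpha> \<longleftrightarrow>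
     (\<forall>m t n. (m, t) \<in> \<alpha> \<longrightarrow> (m * n, t) \<in> \<alpha>) \<and>
     (\<forall>m t s Ts. (m, spine (tm_subst 0 s t) Ts) \<in> \<alpha> \<longrightarrow> (m, spine (App (Lam t) s) Ts) \<in> \<alpha>) \<and>
     (\<forall>m t Y Ts. (m, spine (ty_inst 0 Y t) Ts) \<in> \<alpha> \<longrightarrow> (m, spine (TApp (TLam t) Y) Ts) \<in> \<alpha>)"

text \<open>A phase model: the monoid is the type 'm (commutative, required idempotent),
  and star is the interpretation of formulas.\<close>
definition phase_model :: "(fm \<Rightarrow> ('m::comm_monoid_mult \<times> trm) set) \<Rightarrow> bool" where
  "phase_model star \<longleftrightarrow>
     (\<forall>m::'m. m * m = m) \<and>
     (\<forall>X. closed_set (star (Atom X))) \<and>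
     (\<forall>A B. star (Imp A B) =
        {(m, t). \<forall>n s. (n, s) \<in> star A \<longrightarrow> (m * n, App t s) \<in> star B}) \<and>
     (\<forall>A. star (All A) = {(m, t). \<forall>Y. (m, TApp t Y) \<in> star (inst A Y)}) \<and>
     (\<forall>A. (1, Const A) \<in> star A)"

end

theory Submission
  imports Defs
begin

text \<open>Soundness is proved by induction on the typing derivation, strengthened to an arbitrary
  simultaneous substitution of terms for the term variables and an arbitrary renaming of the
  atoms; the renaming is what the \<open>\<forall>\<close>-introduction case needs, because its premise is typed
  in a lifted context and has to be instantiated at every atom \<open>Y\<close>. Every interpretation
  \<open>A\<^sup>*\<close> is closed (induction on the size of \<open>A\<close>), so the \<open>\<lambda>\<close>- and \<open>\<Lambda>\<close>-cases pass from the
  substituted body to the redex by expansion. The application rule uses the same context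
  for both premises, and idempotency of the monoid absorbs the resulting square \<open>m \<cdot> m\<close>.\<close>

definition upren :: "(nat \<Rightarrow> nat) \<Rightarrow> nat \<Rightarrow> nat" where
  "upren \<rho> i = (case i of 0 \<Rightarrow> 0 | Suc j \<Rightarrow> Suc (\<rho> j))"

lemma upren_simps [simp]: "upren \<rho> 0 = 0" "upren \<rho> (Suc j) = Suc (\<rho> j)"
  by (simp_all add: upren_def)

lemma upren_comp: "upren (\<rho> \<circ> \<rho>') = upren \<rho> \<circ> upren \<rho>'"
  by (rule ext) (simp add: upren_def split: nat.split)

lemma upren_ident [simp]: "upren (\<lambda>i. i) = (\<lambda>i. i)"
  by (rule ext) (simp add: upren_def split: nat.split)

primrec fm_ren :: "(nat \<Rightarrow> nat) \<Rightarrow> fm \<Rightarrow> fm" where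
  "fm_ren \<rho> (Atom i) = Atom (\<rho> i)"
| "fm_ren \<rho> (Imp A B) = Imp (fm_ren \<rho> A) (fm_ren \<rho> B)"
| "fm_ren \<rho> (All A) = All (fm_ren (upren \<rho>) A)"

primrec ty_ren :: "(nat \<Rightarrow> nat) \<Rightarrow> trm \<Rightarrow> trm" where
  "ty_ren \<rho> (Var i) = Var i"
| "ty_ren \<rho> (Const A) = Const (fm_ren \<rho> A)"
| "ty_ren \<rho> (Lam t) = Lam (ty_ren \<rho> t)"
| "ty_ren \<rho> (App t s) = App (ty_ren \<rho> t) (ty_ren \<rho> s)"
| "ty_ren \<rho> (TLam t) = TLam (ty_ren (upren \<rho>) t)"
| "ty_ren \<rho> (TApp t Y) = TApp (ty_ren \<rho> t) (\<rho> Y)"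

lemma fm_ren_fm_ren: "fm_ren \<rho> (fm_ren \<rho>' A) = fm_ren (\<rho> \<circ> \<rho>') A"
  by (induction A arbitrary: \<rho> \<rho>') (simp_all add: upren_comp)

lemma fm_ren_ident [simp]: "fm_ren (\<lambda>i. i) A = A"
  by (induction A) simp_all

lemma size_fm_ren [simp]: "size (fm_ren \<rho> A) = size A"
  by (induction A arbitrary: \<rho>) simp_all

lemma ty_ren_ty_ren: "ty_ren \<rho> (ty_ren \<rho>' t) = ty_ren (\<rho> \<circ> \<rho>') t"
  by (induction t arbitrary: \<rho> \<rho>') (simp_all add: upren_comp fm_ren_fm_ren)

lemma ty_ren_ident [simp]: "ty_ren (\<lambda>i. i) t = t"
  by (induction t) simp_all

text \<open>The lifting and instantiation operations of the syntax are the renamings \<open>Suc\<close> and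
  \<open>case_nat Y id\<close> (sending \<open>0\<close> to \<open>Y\<close> and \<open>j + 1\<close> to \<open>j\<close>) pushed under \<open>k\<close> binders.\<close>

lemma funpow_upren_Suc: "(upren ^^ k) Suc i = (if i < k then i else Suc i)"
  by (induction k arbitrary: i) (auto simp: upren_def split: nat.split)

lemma funpow_upren_case_nat:
  "(upren ^^ k) (case_nat Y id) i = (if i < k then i else if i = k then Y + k else i - 1)"
  by (induction k arbitrary: i) (auto simp: upren_def split: nat.split)

lemma fm_lift_eq_fm_ren: "fm_lift k A = fm_ren ((upren ^^ k) Suc) A"
  by (induction A arbitrary: k) (simp_all add: funpow_upren_Suc)

lemma fm_inst_eq_fm_ren: "fm_inst k Y A = fm_ren ((upren ^^ k) (case_nat Y id)) A"
  by (induction A arbitrary: k) (simp_all add: funpow_upren_case_nat)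

lemma ty_lift_eq_ty_ren: "ty_lift k t = ty_ren ((upren ^^ k) Suc) t"
  by (induction t arbitrary: k) (simp_all add: funpow_upren_Suc fm_lift_eq_fm_ren)

lemma ty_inst_eq_ty_ren: "ty_inst k Y t = ty_ren ((upren ^^ k) (case_nat Y id)) t"
  by (induction t arbitrary: k) (simp_all add: funpow_upren_case_nat fm_inst_eq_fm_ren)

lemma inst_eq_fm_ren: "inst A Y = fm_ren (case_nat Y id) A"
  by (simp add: inst_def fm_inst_eq_fm_ren)

lemma size_inst [simp]: "size (inst A Y) = size A"
  by (simp add: inst_eq_fm_ren)

lemma case_nat_id_comp_upren: "case_nat Y id \<circ> upren \<rho> = case_nat Y \<rho>"
  by (rule ext) (simp add: upren_def split: nat.split)

lemma inst_fm_ren_upren: "inst (fm_ren (upren \<rho>) A) Y = fm_ren (case_nat Y \<rho>) A"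
  by (simp add: inst_eq_fm_ren fm_ren_fm_ren case_nat_id_comp_upren)

lemma fm_ren_inst: "fm_ren \<rho> (inst A Y) = inst (fm_ren (upren \<rho>) A) (\<rho> Y)"
proof -
  have "\<rho> \<circ> case_nat Y id = case_nat (\<rho> Y) \<rho>"
    by (rule ext) (simp split: nat.split)
  then show ?thesis
    by (simp add: inst_fm_ren_upren inst_eq_fm_ren fm_ren_fm_ren case_nat_id_comp_upren)
qed

lemma fm_ren_fm_lift: "fm_ren (case_nat Y \<rho>) (fm_lift 0 A) = fm_ren \<rho> A"
  by (simp add: fm_lift_eq_fm_ren fm_ren_fm_ren comp_def)

lemma ty_inst_ty_ren_upren: "ty_inst 0 Y (ty_ren (upren \<rho>) t) = ty_ren (case_nat Y \<rho>) t"
  by (simp add: ty_inst_eq_ty_ren ty_ren_ty_ren case_nat_id_comp_upren)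

lemma ty_inst_ty_lift: "ty_inst 0 Y (ty_lift 0 t) = t"
proof -
  have "case_nat Y id \<circ> Suc = (\<lambda>i. i)" by (rule ext) simp
  then show ?thesis by (simp add: ty_inst_eq_ty_ren ty_lift_eq_ty_ren ty_ren_ty_ren)
qed

definition subst_up :: "(nat \<Rightarrow> trm) \<Rightarrow> nat \<Rightarrow> trm" where
  "subst_up \<sigma> i = (if i = 0 then Var 0 else tm_lift 0 (\<sigma> (i - 1)))"

lemma msubst_Lam [simp]: "msubst \<sigma> (Lam t) = Lam (msubst (subst_up \<sigma>) t)"
  by (simp add: subst_up_def [abs_def])

declare msubst.simps(3) [simp del]

lemma ty_ren_tm_lift: "ty_ren \<rho> (tm_lift k t) = tm_lift k (ty_ren \<rho> t)"
  by (induction t arbitrary: k \<rho>) simp_all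

lemma ty_ren_msubst: "ty_ren \<rho> (msubst \<sigma> t) = msubst (ty_ren \<rho> \<circ> \<sigma>) (ty_ren \<rho> t)"
proof (induction t arbitrary: \<rho> \<sigma>)
  case (Lam t)
  have "(\<lambda>i. ty_ren \<rho> (subst_up \<sigma> i)) = subst_up (\<lambda>i. ty_ren \<rho> (\<sigma> i))"
    by (rule ext) (simp add: subst_up_def ty_ren_tm_lift)
  then show ?case using Lam by simp
next
  case (TLam t)
  have "ty_ren (upren \<rho>) \<circ> (\<lambda>i. ty_lift 0 (\<sigma> i)) = (\<lambda>i. ty_lift 0 ((ty_ren \<rho> \<circ> \<sigma>) i))"
    by (rule ext) (simp add: ty_lift_eq_ty_ren ty_ren_ty_ren upren_comp [symmetric] comp_def)
  then show ?case using TLam by (simp add: comp_def)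
qed simp_all

lemma msubst_Var: "msubst Var t = t"
proof (induction t)
  case (Lam t)
  have "subst_up Var = Var" by (rule ext) (simp add: subst_up_def)
  then show ?case using Lam by simp
qed simp_all

lemma tm_lift_eq_msubst: "tm_lift k t = msubst (\<lambda>i. Var (if i < k then i else Suc i)) t"
proof (induction t arbitrary: k)
  case (Lam t)
  have "subst_up (\<lambda>i. Var (if i < k then i else Suc i)) = (\<lambda>i. Var (if i < Suc k then i else Suc i))"
    by (rule ext) (auto simp: subst_up_def)
  then show ?case using Lam by simp
qed simp_all

lemma tm_lift_0_eq_msubst: "tm_lift 0 t = msubst (Var \<circ> Suc) t"
  by (simp add: tm_lift_eq_msubst comp_def)

lemma subst_up_Var_comp: "subst_up (Var \<circ> r) = Var \<circ> upren r"
  by (rule ext) (simp add: subst_up_def upren_def split: nat.split)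

lemma msubst_msubst_Var_comp: "msubst \<tau> (msubst (Var \<circ> r) t) = msubst (\<tau> \<circ> r) t"
proof (induction t arbitrary: \<tau> r)
  case (Lam t)
  have "subst_up \<tau> \<circ> upren r = subst_up (\<tau> \<circ> r)"
    by (rule ext) (simp add: subst_up_def upren_def split: nat.split)
  then show ?case using Lam by (simp add: subst_up_Var_comp [unfolded comp_def] comp_def)
next
  case (TLam t)
  have "(\<lambda>i. ty_lift 0 ((Var \<circ> r) i)) = Var \<circ> r" by (rule ext) simp
  then show ?case using TLam by (simp add: comp_def)
qed simp_all

lemma msubst_Var_comp_msubst:
  "msubst (Var \<circ> r) (msubst \<sigma> t) = msubst (msubst (Var \<circ> r) \<circ> \<sigma>) t"
proof (induction t arbitrary: \<sigma> r)
  case (Lam t)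
  have "msubst (Var \<circ> upren r) (tm_lift 0 u) = tm_lift 0 (msubst (Var \<circ> r) u)" for u
  proof -
    have "Var \<circ> upren r \<circ> Suc = Var \<circ> Suc \<circ> r" by (rule ext) simp
    then show ?thesis by (simp add: tm_lift_0_eq_msubst msubst_msubst_Var_comp)
  qed
  then have "msubst (Var \<circ> upren r) \<circ> subst_up \<sigma> = subst_up (msubst (Var \<circ> r) \<circ> \<sigma>)"
    by (intro ext) (simp add: subst_up_def)
  then show ?case using Lam by (simp add: subst_up_Var_comp [unfolded comp_def] comp_def)
next
  case (TLam t)
  have "(\<lambda>i. ty_lift 0 ((Var \<circ> r) i)) = Var \<circ> r" by (rule ext) simp
  moreover have "msubst (Var \<circ> r) \<circ> (\<lambda>i. ty_lift 0 (\<sigma> i))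
      = (\<lambda>i. ty_lift 0 ((msubst (Var \<circ> r) \<circ> \<sigma>) i))"
    by (rule ext) (simp add: ty_ren_msubst ty_lift_eq_ty_ren comp_def)
  ultimately show ?case using TLam by (simp add: comp_def)
qed simp_all

lemma msubst_msubst: "msubst \<tau> (msubst \<sigma> t) = msubst (msubst \<tau> \<circ> \<sigma>) t"
proof (induction t arbitrary: \<sigma> \<tau>)
  case (Lam t)
  have "msubst (subst_up \<tau>) (tm_lift 0 u) = tm_lift 0 (msubst \<tau> u)" for u
  proof -
    have "subst_up \<tau> \<circ> Suc = msubst (Var \<circ> Suc) \<circ> \<tau>"
      by (rule ext) (simp add: subst_up_def tm_lift_0_eq_msubst)
    then show ?thesis
      by (simp add: tm_lift_0_eq_msubst msubst_msubst_Var_comp msubst_Var_comp_msubst)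
  qed
  then have "(\<lambda>i. msubst (subst_up \<tau>) (subst_up \<sigma> i)) = subst_up (\<lambda>i. msubst \<tau> (\<sigma> i))"
    by (intro ext) (simp add: subst_up_def)
  then show ?case using Lam by (simp add: comp_def)
next
  case (TLam t)
  have "msubst (\<lambda>i. ty_lift 0 (\<tau> i)) \<circ> (\<lambda>i. ty_lift 0 (\<sigma> i))
      = (\<lambda>i. ty_lift 0 ((msubst \<tau> \<circ> \<sigma>) i))"
    by (rule ext) (simp add: ty_ren_msubst ty_lift_eq_ty_ren comp_def)
  then show ?case using TLam by (simp add: comp_def)
qed simp_all

lemma ty_inst_msubst: "ty_inst 0 Y (msubst \<sigma> t) = msubst (\<lambda>i. ty_inst 0 Y (\<sigma> i)) (ty_inst 0 Y t)"
  by (simp add: ty_inst_eq_ty_ren ty_ren_msubst comp_def)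

definition subst_at :: "nat \<Rightarrow> trm \<Rightarrow> nat \<Rightarrow> trm" where
  "subst_at k s i = (if i < k then Var i else if i = k then s else Var (i - 1))"

lemma tm_subst_eq_msubst: "tm_subst k s t = msubst (subst_at k s) t"
proof (induction t arbitrary: k s)
  case (Lam t)
  have "subst_up (subst_at k s) = subst_at (Suc k) (tm_lift 0 s)"
    by (rule ext) (auto simp: subst_up_def subst_at_def)
  then show ?case using Lam by simp
next
  case (TLam t)
  have "(\<lambda>i. ty_lift 0 (subst_at k s i)) = subst_at k (ty_lift 0 s)"
    by (rule ext) (auto simp: subst_at_def)
  then show ?case using TLam by simp
qed (simp_all add: subst_at_def)

lemma tm_subst_msubst_subst_up: "tm_subst 0 s (msubst (subst_up \<sigma>) t) = msubst (case_nat s \<sigma>) t"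
proof -
  have "msubst (subst_at 0 s) \<circ> subst_up \<sigma> = case_nat s \<sigma>"
  proof
    fix i
    have "subst_at 0 s \<circ> Suc = Var" by (rule ext) (simp add: subst_at_def)
    then show "(msubst (subst_at 0 s) \<circ> subst_up \<sigma>) i = case_nat s \<sigma> i"
      by (cases i) (simp_all add: subst_up_def subst_at_def tm_lift_0_eq_msubst
          msubst_msubst_Var_comp msubst_Var)
  qed
  then show ?thesis by (simp add: tm_subst_eq_msubst msubst_msubst)
qed

lemma spine_Nil [simp]: "spine t [] = t"
  by (simp add: spine_def)

lemma spine_snoc_Inl: "spine t (Ts @ [Inl s]) = App (spine t Ts) s"
  by (simp add: spine_def)

lemma spine_snoc_Inr: "spine t (Ts @ [Inr Y]) = TApp (spine t Ts) Y"
  by (simp add: spine_def)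

lemma closed_setI:
  assumes "\<And>m t n. (m, t) \<in> \<alpha> \<Longrightarrow> (m * n, t) \<in> \<alpha>"
    and "\<And>m t s Ts. (m, spine (tm_subst 0 s t) Ts) \<in> \<alpha> \<Longrightarrow> (m, spine (App (Lam t) s) Ts) \<in> \<alpha>"
    and "\<And>m t Y Ts. (m, spine (ty_inst 0 Y t) Ts) \<in> \<alpha> \<Longrightarrow> (m, spine (TApp (TLam t) Y) Ts) \<in> \<alpha>"
  shows "closed_set \<alpha>"
  using assms by (auto simp: closed_set_def)

lemma
  assumes "closed_set \<alpha>"
  shows closed_set_mult: "(m, t) \<in> \<alpha> \<Longrightarrow> (m * n, t) \<in> \<alpha>"
    and closed_set_beta: "(m, spine (tm_subst 0 s t) Ts) \<in> \<alpha> \<Longrightarrow> (m, spine (App (Lam t) s) Ts) \<in> \<alpha>"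
    and closed_set_tbeta: "(m, spine (ty_inst 0 Y t) Ts) \<in> \<alpha> \<Longrightarrow> (m, spine (TApp (TLam t) Y) Ts) \<in> \<alpha>"
  using assms by (auto simp: closed_set_def)

definition phase_imp :: "('m::times \<times> trm) set \<Rightarrow> ('m \<times> trm) set \<Rightarrow> ('m \<times> trm) set" where
  "phase_imp \<alpha> \<beta> = {(m, t). \<forall>n s. (n, s) \<in> \<alpha> \<longrightarrow> (m * n, App t s) \<in> \<beta>}"

definition phase_all :: "(nat \<Rightarrow> ('m \<times> trm) set) \<Rightarrow> ('m \<times> trm) set" where
  "phase_all \<beta> = {(m, t). \<forall>Y. (m, TApp t Y) \<in> \<beta> Y}"

text \<open>Expansion is demanded under arbitrary spines so that it is inherited by \<open>phase_imp\<close>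
  and \<open>phase_all\<close>: the extra argument only extends the spine.\<close>

lemma phase_imp_expand:
  assumes "\<And>m Ts. (m, spine c Ts) \<in> \<beta> \<Longrightarrow> (m, spine r Ts) \<in> \<beta>"
    and "(m, spine c Ts) \<in> phase_imp \<alpha> \<beta>"
  shows "(m, spine r Ts) \<in> phase_imp \<alpha> \<beta>"
  unfolding phase_imp_def
proof (clarify)
  fix n s
  assume "(n, s) \<in> \<alpha>"
  then have "(m * n, App (spine c Ts) s) \<in> \<beta>"
    using assms(2) by (simp add: phase_imp_def)
  then have "(m * n, spine r (Ts @ [Inl s])) \<in> \<beta>"
    by (intro assms(1)) (simp add: spine_snoc_Inl)
  then show "(m * n, App (spine r Ts) s) \<in> \<beta>"
    by (simp add: spine_snoc_Inl)
qed

lemma phase_all_expand: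
  assumes "\<And>Y m Ts. (m, spine c Ts) \<in> \<beta> Y \<Longrightarrow> (m, spine r Ts) \<in> \<beta> Y"
    and "(m, spine c Ts) \<in> phase_all \<beta>"
  shows "(m, spine r Ts) \<in> phase_all \<beta>"
  unfolding phase_all_def
proof (clarify)
  fix Y
  have "(m, TApp (spine c Ts) Y) \<in> \<beta> Y"
    using assms(2) by (simp add: phase_all_def)
  then have "(m, spine r (Ts @ [Inr Y])) \<in> \<beta> Y"
    by (intro assms(1)) (simp add: spine_snoc_Inr)
  then show "(m, TApp (spine r Ts) Y) \<in> \<beta> Y"
    by (simp add: spine_snoc_Inr)
qed

lemma closed_set_phase_imp:
  fixes \<alpha> \<beta> :: "('m::comm_monoid_mult \<times> trm) set"
  assumes "closed_set \<beta>"
  shows "closed_set (phase_imp \<alpha> \<beta>)"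
proof (rule closed_setI)
  fix m t n
  assume "(m, t) \<in> phase_imp \<alpha> \<beta>"
  then have "(m * n' * n, App t s) \<in> \<beta>" if "(n', s) \<in> \<alpha>" for n' s
    using that assms by (auto simp: phase_imp_def intro: closed_set_mult)
  then show "(m * n, t) \<in> phase_imp \<alpha> \<beta>"
    by (simp add: phase_imp_def ac_simps)
qed (use assms in \<open>blast intro: phase_imp_expand closed_set_beta closed_set_tbeta\<close>)+

lemma closed_set_phase_all:
  assumes "\<And>Y. closed_set (\<beta> Y)"
  shows "closed_set (phase_all \<beta>)"
proof (rule closed_setI)
  show "(m, t) \<in> phase_all \<beta> \<Longrightarrow> (m * n, t) \<in> phase_all \<beta>" for m t n
    using assms by (auto simp: phase_all_def intro: closed_set_mult)
qed (use assms in \<open>blast intro: phase_all_expand closed_set_beta closed_set_tbeta\<close>)+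

lemma
  fixes star :: "fm \<Rightarrow> ('m::comm_monoid_mult \<times> trm) set" and m :: 'm
  assumes "phase_model star"
  shows phase_model_idem: "m * m = m"
    and phase_model_Atom: "closed_set (star (Atom X))"
    and phase_model_Imp: "star (Imp A B) = phase_imp (star A) (star B)"
    and phase_model_All: "star (All A) = phase_all (\<lambda>Y. star (inst A Y))"
    and phase_model_Const: "(1, Const A) \<in> star A"
  using assms by (auto simp: phase_model_def phase_imp_def phase_all_def)

lemma phase_model_closed_set:
  fixes star :: "fm \<Rightarrow> ('m::comm_monoid_mult \<times> trm) set"
  assumes "phase_model star"
  shows "closed_set (star A)"
proof (induction "size A" arbitrary: A rule: less_induct)
  case less
  then show ?case
    using assms by (cases A)
      (simp_all add: phase_model_Atom phase_model_Imp phase_model_All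
        closed_set_phase_imp closed_set_phase_all)
qed

lemma phase_model_mult:
  fixes star :: "fm \<Rightarrow> ('m::comm_monoid_mult \<times> trm) set"
  assumes "phase_model star" and "(m, t) \<in> star A"
  shows "(m * n, t) \<in> star A"
  using assms by (blast intro: closed_set_mult phase_model_closed_set)

lemma phase_model_Lam:
  fixes star :: "fm \<Rightarrow> ('m::comm_monoid_mult \<times> trm) set"
  assumes pm: "phase_model star"
    and body: "\<And>n s. (n, s) \<in> star A \<Longrightarrow> (m * n, tm_subst 0 s t) \<in> star B"
  shows "(m, Lam t) \<in> star (Imp A B)"
  unfolding phase_model_Imp [OF pm] phase_imp_def
proof (clarify)
  fix n s
  assume "(n, s) \<in> star A"
  then have "(m * n, spine (tm_subst 0 s t) []) \<in> star B"
    using body by simp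
  then show "(m * n, App (Lam t) s) \<in> star B"
    using closed_set_beta [OF phase_model_closed_set [OF pm]] by fastforce
qed

lemma phase_model_App:
  fixes star :: "fm \<Rightarrow> ('m::comm_monoid_mult \<times> trm) set"
  assumes pm: "phase_model star" and "(m, t) \<in> star (Imp A B)" and "(m, s) \<in> star A"
  shows "(m, App t s) \<in> star B"
proof -
  have "(m * m, App t s) \<in> star B"
    using assms by (simp add: phase_model_Imp phase_imp_def)
  then show ?thesis by (simp add: phase_model_idem [OF pm])
qed

lemma phase_model_TLam:
  fixes star :: "fm \<Rightarrow> ('m::comm_monoid_mult \<times> trm) set"
  assumes pm: "phase_model star"
    and body: "\<And>Y. (m, ty_inst 0 Y t) \<in> star (inst A Y)"
  shows "(m, TLam t) \<in> star (All A)"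
  unfolding phase_model_All [OF pm] phase_all_def
proof (clarify)
  fix Y
  have "(m, spine (ty_inst 0 Y t) []) \<in> star (inst A Y)"
    using body by simp
  then show "(m, TApp (TLam t) Y) \<in> star (inst A Y)"
    using closed_set_tbeta [OF phase_model_closed_set [OF pm]] by fastforce
qed

lemma phase_model_TApp:
  fixes star :: "fm \<Rightarrow> ('m::comm_monoid_mult \<times> trm) set"
  assumes "phase_model star" and "(m, t) \<in> star (All A)"
  shows "(m, TApp t Y) \<in> star (inst A Y)"
  using assms by (simp add: phase_model_All phase_all_def)

lemma typing_sound:
  fixes star :: "fm \<Rightarrow> ('m::comm_monoid_mult \<times> trm) set"
  assumes "typing \<Gamma> t A" and pm: "phase_model star"
    and "length ms = length \<Gamma>"
    and "\<forall>i < length \<Gamma>. (ms ! i, \<sigma> i) \<in> star (fm_ren \<rho> (\<Gamma> ! i))"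
  shows "(prod_list ms, msubst \<sigma> (ty_ren \<rho> t)) \<in> star (fm_ren \<rho> A)"
  using assms(1,3,4)
proof (induction arbitrary: \<rho> \<sigma> ms rule: typing.induct)
  case (ty_var i \<Gamma>)
  then have "ms ! i \<in> set ms" by simp
  then obtain r where r: "prod_list ms = ms ! i * r"
    using prod_list_dvd by blast
  have "(ms ! i, \<sigma> i) \<in> star (fm_ren \<rho> (\<Gamma> ! i))"
    using ty_var by blast
  then show ?case
    unfolding r by (simp add: phase_model_mult [OF pm])
next
  case (ty_const \<Gamma> A)
  have "(1 * prod_list ms, Const (fm_ren \<rho> A)) \<in> star (fm_ren \<rho> A)"
    by (rule phase_model_mult [OF pm phase_model_Const [OF pm]])
  then show ?case by simp
next
  case (ty_lam A \<Gamma> t B)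
  have "(prod_list ms * n, tm_subst 0 s (msubst (subst_up \<sigma>) (ty_ren \<rho> t))) \<in> star (fm_ren \<rho> B)"
    if "(n, s) \<in> star (fm_ren \<rho> A)" for n s
  proof -
    have "(prod_list (n # ms), msubst (case_nat s \<sigma>) (ty_ren \<rho> t)) \<in> star (fm_ren \<rho> B)"
      using ty_lam.prems that by (intro ty_lam.IH) (auto simp: nth_Cons split: nat.split)
    then show ?thesis
      by (simp add: tm_subst_msubst_subst_up mult.commute)
  qed
  then show ?case
    by (simp add: phase_model_Lam [OF pm])
next
  case (ty_app \<Gamma> t A B s)
  have "(prod_list ms, msubst \<sigma> (ty_ren \<rho> t)) \<in> star (Imp (fm_ren \<rho> A) (fm_ren \<rho> B))"
    using ty_app.IH(1) ty_app.prems by simp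
  moreover have "(prod_list ms, msubst \<sigma> (ty_ren \<rho> s)) \<in> star (fm_ren \<rho> A)"
    using ty_app.IH(2) ty_app.prems by blast
  ultimately show ?case
    by (simp add: phase_model_App [OF pm])
next
  case (ty_tlam \<Gamma> t A)
  have "(prod_list ms, ty_inst 0 Y (msubst (\<lambda>i. ty_lift 0 (\<sigma> i)) (ty_ren (upren \<rho>) t)))
      \<in> star (inst (fm_ren (upren \<rho>) A) Y)" for Y
  proof -
    have "(prod_list ms, msubst \<sigma> (ty_ren (case_nat Y \<rho>) t)) \<in> star (fm_ren (case_nat Y \<rho>) A)"
      using ty_tlam.prems by (intro ty_tlam.IH) (simp_all add: fm_ren_fm_lift)
    then show ?thesis
      by (simp add: ty_inst_msubst ty_inst_ty_lift ty_inst_ty_ren_upren inst_fm_ren_upren)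
  qed
  then show ?case
    by (simp add: phase_model_TLam [OF pm])
next
  case (ty_tapp \<Gamma> t A Y)
  then show ?case
    by (simp add: phase_model_TApp [OF pm] fm_ren_inst)
qed

theorem mainTheorem4:
  fixes star :: "fm \<Rightarrow> ('m::comm_monoid_mult \<times> trm) set"
    and \<Gamma> :: "fm list" and t :: trm and A :: fm and ms :: "'m list" and ts :: "trm list"
  assumes "phase_model star"
    and "typing \<Gamma> t A"
    and "length ms = length \<Gamma>"
    and "length ts = length \<Gamma>"
    and "\<forall>i < length \<Gamma>. (ms ! i, ts ! i) \<in> star (\<Gamma> ! i)"
  shows "(prod_list ms, psubst ts t) \<in> star A"
  using typing_sound [OF assms(2,1,3), where \<rho> = "\<lambda>i. i"
      and \<sigma> = "\<lambda>i. if i < length ts then ts ! i else Var (i - length ts)"] assms(4,5)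
  by (simp add: psubst_def)

end
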